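(* Let $q$ be a prime power, $v\ge2$, and let $u\in\mathbb{Z}$, $m\ge0$ and $\Delta\ge1$ be integers. Let $\mathcal{C}$ be a set of points of $\mathrm{PG}(v-1,q)$ with $|\mathcal{C}\cap H|\equiv u\pmod{\Delta}$ for every hyperplane $H$ and with cardinality $n=u+m\Delta\ge0$. Then $$(q-1)\cdot\sum_{h\in\mathbb{Z},\,h\le m}h(h-1)\,a_{u+h\Delta}=\tau_q(u,\Delta,m)\cdot\frac{q^{v-2}}{\Delta^2}-m(m-1),$$ where $$\tau_q(u,\Delta,m)=m(m-q)\Delta^2+\left(q^2u-2mqu+mq+2mu-qu-m\right)\Delta+(q-1)^2u^2+(q-1)u,$$ $a_i$ denotes the number of hyperplanes $H$ with $|\mathcal{C}\cap H|=i$, and $a_{u+h\Delta}:=0$ whenever $u+h\Delta<0$.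
   Context: $\mathrm{PG}(v-1,q)$ is the set of $1$-dimensional subspaces (points) of $\mathbb{F}_q^v$; hyperplanes are the $(v-1)$-dimensional subspaces of $\mathbb{F}_q^v$, and $\mathcal{C}\cap H$ is the set of points of $\mathcal{C}$ contained in $H$. *)

theory Defs
  imports "HOL-Analysis.Cartesian_Space"
begin

text \<open>The vector space F_q^v is modelled as vectors 'a^'n, where 'a is a finite
field (so q = CARD('a) is automatically a prime power) and v = CARD('n).\<close>

definition PG_points :: "('a::{field,finite}^'n::finite) set set" where
  "PG_points = {S. vec.subspace S \<and> vec.dim S = 1}"

definition PG_hyperplanes :: "('a::{field,finite}^'n::finite) set set" where
  "PG_hyperplanes = {S. vec.subspace S \<and> vec.dim S = CARD('n) - 1}"

definition pts_in :: "('a^'n) set set \<Rightarrow> ('a^'n) set \<Rightarrow> nat" where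
  "pts_in C H = card {P \<in> C. P \<subseteq> H}"

definition spec_a :: "('a::{field,finite}^'n::finite) set set \<Rightarrow> int \<Rightarrow> nat" where
  "spec_a C i = card {H \<in> PG_hyperplanes. int (pts_in C H) = i}"

definition tau :: "int \<Rightarrow> int \<Rightarrow> int \<Rightarrow> int \<Rightarrow> int" where
  "tau q u \<Delta> m = m*(m-q)*\<Delta>^2 + (q^2*u - 2*m*q*u + m*q + 2*m*u - q*u - m)*\<Delta>
      + (q-1)^2*u^2 + (q-1)*u"

end

(*
  A subspace W of dimension d lies in exactly (q^(v-d) - 1)/(q - 1) hyperplanes: the
  hyperplanes through W are the perp {y} with y a nonzero vector of perp W, which has
  q^(v-d) elements, and each hyperplane arises from exactly the q - 1 nonzero vectors
  of its own (one-dimensional) orthogonal complement. Applying this to the zero space,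
  to a point and to the line through two points and double counting gives the first
  three moments of the numbers |C \<inter> H| over all hyperplanes H (the standard equations).
  Writing |C \<inter> H| = u + h\<^sub>H \<Delta>, the quantity \<Delta>^2 h\<^sub>H (h\<^sub>H - 1) is a quadratic polynomial
  in |C \<inter> H|, so its sum over all hyperplanes, which is the left-hand side grouped by the
  value of h\<^sub>H, is determined by these three moments.
*)
theory Submission
  imports Defs
begin

section \<open>Orthogonal complements in finite vector spaces\<close>

definition dotp :: "'a::field^'n \<Rightarrow> 'a^'n \<Rightarrow> 'a" where
  "dotp x y = (\<Sum>i\<in>UNIV. x$i * y$i)"

definition perp :: "('a::field^'n) set \<Rightarrow> ('a^'n) set" where
  "perp S = {y. \<forall>x\<in>S. dotp x y = 0}"

lemma dotp_commute: "dotp x y = dotp y x"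
  unfolding dotp_def by (simp add: mult.commute)

lemma dotp_add_left: "dotp (x + z) y = dotp x y + dotp z y"
  unfolding dotp_def by (simp add: distrib_right sum.distrib)

lemma dotp_scale_left: "dotp (c *s x) y = c * dotp x y"
  unfolding dotp_def by (simp add: sum_distrib_left mult.assoc)

lemma dotp_diff_right: "dotp x (y - z) = dotp x y - dotp x z"
  unfolding dotp_def by (simp add: right_diff_distrib sum_subtractf)

lemma dotp_zero_left [simp]: "dotp 0 y = 0"
  unfolding dotp_def by simp

lemma dotp_axis_left: "dotp (axis i 1) y = y $ i"
  by (simp add: dotp_def axis_def if_distrib[of "\<lambda>c. c * _"] cong: if_cong)

lemma subspace_dotp_kernel: "vec.subspace {x. dotp x y = 0}"
  unfolding vec.subspace_def by (simp add: dotp_add_left dotp_scale_left)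

lemma subspace_perp: "vec.subspace (perp S)"
proof -
  have "perp S = (\<Inter>x\<in>S. {y. dotp y x = 0})"
    unfolding perp_def by (auto simp: dotp_commute)
  then show ?thesis
    using subspace_dotp_kernel by (auto intro: vec.subspace_Inter)
qed

lemma perp_antimono: "S \<subseteq> T \<Longrightarrow> perp T \<subseteq> perp S"
  unfolding perp_def by auto

lemma perp_singleton: "perp {y} = {x. dotp y x = 0}"
  unfolding perp_def by simp

lemma perp_span [simp]: "perp (vec.span S) = perp S"
proof
  show "perp S \<subseteq> perp (vec.span S)"
  proof
    fix y assume "y \<in> perp S"
    then have "S \<subseteq> {x. dotp x y = 0}" unfolding perp_def by auto
    then have "vec.span S \<subseteq> {x. dotp x y = 0}"
      using vec.span_minimal subspace_dotp_kernel by blast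
    then show "y \<in> perp (vec.span S)" unfolding perp_def by auto
  qed
qed (simp add: perp_antimono vec.span_superset)

lemma perp_UNIV: "perp UNIV = {0 :: 'a::field^'n}"
proof -
  have "y = 0" if "y \<in> perp UNIV" for y :: "'a^'n"
    using that dotp_axis_left[of _ y] unfolding perp_def by (simp add: vec_eq_iff)
  moreover have "0 \<in> perp (UNIV :: ('a^'n) set)"
    unfolding perp_def dotp_def by simp
  ultimately show ?thesis by blast
qed

lemma card_field_ge_2: "CARD('a::{field,finite}) \<ge> 2"
proof -
  have "card {0::'a, 1} \<le> CARD('a)" by (rule card_mono) simp_all
  then show ?thesis by simp
qed

lemma card_span_independent:
  fixes B :: "('a::{field,finite}^'n) set"
  assumes indep: "vec.independent B"
  shows "card (vec.span B) = CARD('a) ^ card B"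
proof -
  define combine where "combine c = (\<Sum>b\<in>B. c b *s b)" for c :: "'a^'n \<Rightarrow> 'a"
  have no_relation: "\<forall>b\<in>B. c b = 0" if "(\<Sum>b\<in>B. c b *s b) = 0" for c
    using indep that vec.dependent_finite[of B] by auto
  have "inj_on combine (B \<rightarrow>\<^sub>E UNIV)"
  proof (rule inj_onI)
    fix c d assume c: "c \<in> B \<rightarrow>\<^sub>E UNIV" and d: "d \<in> B \<rightarrow>\<^sub>E UNIV" and "combine c = combine d"
    then have "(\<Sum>b\<in>B. (c b - d b) *s b) = 0"
      by (simp add: combine_def vec.scale_left_diff_distrib sum_subtractf)
    then have "\<forall>b\<in>B. c b - d b = 0" by (rule no_relation)
    then show "c = d" using c d by (auto simp: PiE_iff extensional_def fun_eq_iff)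
  qed
  moreover have "combine ` (B \<rightarrow>\<^sub>E UNIV) = vec.span B"
  proof
    show "combine ` (B \<rightarrow>\<^sub>E UNIV) \<subseteq> vec.span B"
      unfolding combine_def by (blast intro: vec.span_sum vec.span_scale vec.span_base)
    show "vec.span B \<subseteq> combine ` (B \<rightarrow>\<^sub>E UNIV)"
    proof
      fix x assume "x \<in> vec.span B"
      then obtain c where "x = (\<Sum>b\<in>B. c b *s b)"
        unfolding vec.span_finite[OF finite] by auto
      moreover have "combine (restrict c B) = (\<Sum>b\<in>B. c b *s b)"
        unfolding combine_def by (rule sum.cong) auto
      ultimately show "x \<in> combine ` (B \<rightarrow>\<^sub>E UNIV)"
        by (intro image_eqI[of _ _ "restrict c B"]) auto
    qed
  qed
  ultimately have "card (vec.span B) = card (B \<rightarrow>\<^sub>E (UNIV :: 'a set))"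
    by (metis card_image)
  then show ?thesis by (simp add: card_PiE)
qed

lemma card_subspace:
  fixes S :: "('a::{field,finite}^'n) set"
  assumes "vec.subspace S"
  shows "card S = CARD('a) ^ vec.dim S"
proof -
  obtain B where B: "B \<subseteq> S" "vec.independent B" "S \<subseteq> vec.span B" "card B = vec.dim S"
    using vec.basis_exists by blast
  then have "vec.span B = S" using vec.span_subspace[OF _ _ assms] by blast
  then show ?thesis using card_span_independent[OF B(2)] B(4) by simp
qed

lemma dim_subspace_eq_of_card:
  fixes S :: "('a::{field,finite}^'n) set"
  assumes "vec.subspace S" "card S = CARD('a) ^ k"
  shows "vec.dim S = k"
proof -
  have "CARD('a) ^ vec.dim S = CARD('a) ^ k" using card_subspace[OF assms(1)] assms(2) by simp
  moreover have "1 < CARD('a)" using card_field_ge_2[where 'a='a] by simp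
  ultimately show ?thesis by simp
qed

lemma card_basis_UNIV:
  fixes B :: "('a::field^'n) set"
  assumes "vec.independent B" "vec.span B = UNIV"
  shows "card B = CARD('n)"
proof -
  have "card B = vec.dim (vec.span B)"
    using vec.dim_eq_card_independent[OF assms(1)] by simp
  then show ?thesis using assms(2) vec_dim_card[where 'a='a and 'n='n] by simp
qed

lemma bij_betw_dotp_coordinates:
  fixes B :: "('a::{field,finite}^'n) set"
  assumes "vec.independent B" "vec.span B = UNIV"
  shows "bij_betw (\<lambda>y. restrict (\<lambda>b. dotp b y) B) UNIV (B \<rightarrow>\<^sub>E UNIV)"
proof -
  let ?coords = "\<lambda>y. restrict (\<lambda>b. dotp b y) B"
  have "inj ?coords"
  proof (rule injI)
    fix y z assume "?coords y = ?coords z"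
    then have "\<forall>b\<in>B. dotp b y = dotp b z" by (metis restrict_apply')
    then have "y - z \<in> perp B" unfolding perp_def by (simp add: dotp_diff_right)
    then have "y - z \<in> perp UNIV" using assms(2) perp_span[of B] by simp
    then show "y = z" by (simp add: perp_UNIV)
  qed
  moreover have "card (range ?coords) = card (B \<rightarrow>\<^sub>E (UNIV :: 'a set))"
    using card_image[OF \<open>inj ?coords\<close>] card_basis_UNIV[OF assms] by (simp add: card_PiE)
  then have "range ?coords = B \<rightarrow>\<^sub>E UNIV"
    by (intro card_subset_eq) auto
  ultimately show ?thesis by (simp add: bij_betw_def)
qed

lemma card_perp:
  fixes S :: "('a::{field,finite}^'n) set"
  assumes "vec.subspace S"
  shows "card (perp S) = CARD('a) ^ (CARD('n) - vec.dim S)"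
proof -
  obtain B where B: "B \<subseteq> S" "vec.independent B" "S \<subseteq> vec.span B" "card B = vec.dim S"
    using vec.basis_exists by blast
  obtain B' where B': "B \<subseteq> B'" "vec.independent B'" "vec.span B' = UNIV"
    using vec.maximal_independent_subset_extend[OF subset_UNIV B(2)] by (metis top.extremum_unique)
  let ?coords = "\<lambda>y. restrict (\<lambda>b. dotp b y) B'"
  let ?Z = "PiE B' (\<lambda>b. if b \<in> B then {0} else (UNIV :: 'a set))"
  have bij: "bij_betw ?coords UNIV (B' \<rightarrow>\<^sub>E UNIV)"
    by (rule bij_betw_dotp_coordinates[OF B'(2,3)])
  have "vec.span B = S" by (rule vec.span_subspace[OF B(1,3) assms])
  then have "perp S = perp B" using perp_span[of B] by simp
  then have "perp S = ?coords -` ?Z"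
    using B'(1) unfolding perp_def by (fastforce simp: PiE_iff)
  moreover have "?Z \<subseteq> B' \<rightarrow>\<^sub>E UNIV" by (rule PiE_mono) auto
  ultimately have "?coords ` perp S = ?Z"
    using bij unfolding bij_betw_def by (simp add: image_vimage_eq Int_absorb2)
  then have "card (perp S) = card ?Z"
    using bij card_image inj_on_subset unfolding bij_betw_def by (metis subset_UNIV)
  also have "\<dots> = (\<Prod>b\<in>B'. if b \<in> B then 1 else CARD('a))"
    by (simp add: card_PiE) (rule prod.cong, auto)
  also have "\<dots> = CARD('a) ^ card (B' - B)"
    by (simp add: prod.If_cases Diff_eq)
  also have "card (B' - B) = CARD('n) - vec.dim S"
    using card_Diff_subset[OF _ B'(1)] card_basis_UNIV[OF B'(2,3)] B(4) by simp
  finally show ?thesis .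
qed

section \<open>Hyperplanes through a subspace\<close>

lemma perp_swap: "S \<subseteq> perp T \<Longrightarrow> T \<subseteq> perp S"
proof
  fix x assume "S \<subseteq> perp T" "x \<in> T"
  then have "\<forall>y\<in>S. dotp x y = 0" unfolding perp_def by blast
  then show "x \<in> perp S" unfolding perp_def by (simp add: dotp_commute[of _ x])
qed

lemma subset_perp_iff: "S \<subseteq> perp T \<longleftrightarrow> T \<subseteq> perp S"
  using perp_swap by blast

lemma perp_singleton_in_PG_hyperplanes:
  fixes y :: "'a::{field,finite}^'n"
  assumes "y \<noteq> 0"
  shows "perp {y} \<in> PG_hyperplanes"
proof -
  have "vec.dim (vec.span {y}) = 1"
    using assms vec.dim_eq_card_independent[of "{y}"] by (simp add: vec.independent_insert)
  then have "card (perp {y}) = CARD('a) ^ (CARD('n) - 1)"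
    using card_perp[OF vec.subspace_span, of "{y}"] by simp
  then show ?thesis
    using dim_subspace_eq_of_card[OF subspace_perp] subspace_perp
    unfolding PG_hyperplanes_def by blast
qed

lemma perp_singleton_eq_PG_hyperplane_iff:
  fixes H :: "('a::{field,finite}^'n) set"
  assumes "H \<in> PG_hyperplanes"
  shows "perp {y} = H \<longleftrightarrow> y \<in> perp H - {0}"
proof -
  have H: "vec.subspace H" "vec.dim H = CARD('n) - 1"
    using assms unfolding PG_hyperplanes_def by auto
  have "H \<noteq> UNIV"
  proof
    assume "H = UNIV"
    then have "CARD('n) - 1 = CARD('n)" using H(2) vec_dim_card[where 'a='a and 'n='n] by simp
    moreover have "0 < CARD('n)" by (simp add: card_gt_0_iff)
    ultimately show False by linarith
  qed
  then have "perp {0} \<noteq> H" by (simp add: perp_singleton)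
  moreover have "perp {y} = H" if "y \<in> perp H" "y \<noteq> 0"
  proof (rule vec.subspace_dim_equal[OF H(1) subspace_perp, symmetric])
    show "H \<subseteq> perp {y}" using that(1) subset_perp_iff[of H "{y}"] by simp
    show "vec.dim (perp {y}) \<le> vec.dim H"
      using perp_singleton_in_PG_hyperplanes[OF that(2)] H(2) unfolding PG_hyperplanes_def by simp
  qed
  moreover have "y \<in> perp (perp {y})" using subset_perp_iff[of "{y}" "perp {y}"] by simp
  ultimately show ?thesis by blast
qed

lemma card_PG_hyperplanes_containing:
  fixes W :: "('a::{field,finite}^'n::finite) set"
  assumes "vec.subspace W"
  shows "(real CARD('a) - 1) * card {H \<in> PG_hyperplanes. W \<subseteq> H}
    = real CARD('a) ^ (CARD('n) - vec.dim W) - 1"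
proof -
  let ?Hs = "{H \<in> PG_hyperplanes. W \<subseteq> H}"
  let ?F = "perp W - {0}"
  have zero_in_perp: "0 \<in> perp S" for S :: "('a^'n) set"
    by (rule vec.subspace_0[OF subspace_perp])
  have maps_to: "(\<lambda>y. perp {y}) ` ?F \<subseteq> ?Hs"
    using perp_singleton_in_PG_hyperplanes subset_perp_iff[of W] by auto
  have "card ?F = (\<Sum>H\<in>?Hs. card {y \<in> ?F. perp {y} = H})"
    unfolding card_eq_sum by (rule sum.group[OF finite finite maps_to, symmetric])
  also have "\<dots> = (\<Sum>H\<in>?Hs. CARD('a) - 1)"
  proof (rule sum.cong)
    fix H assume "H \<in> ?Hs"
    then have H: "H \<in> PG_hyperplanes" "W \<subseteq> H" by auto
    have fibre: "{y \<in> ?F. perp {y} = H} = perp H - {0}"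
      using perp_singleton_eq_PG_hyperplane_iff[OF H(1)] perp_antimono[OF H(2)] by auto
    have "0 < CARD('n)" by (simp add: card_gt_0_iff)
    then have "card (perp H) = CARD('a)"
      using card_perp[of H] H(1) unfolding PG_hyperplanes_def by simp
    then show "card {y \<in> ?F. perp {y} = H} = CARD('a) - 1"
      unfolding fibre by (simp add: card_Diff_singleton zero_in_perp)
  qed simp
  also have "\<dots> = (CARD('a) - 1) * card ?Hs" by simp
  finally have "real ((CARD('a) - 1) * card ?Hs) = real (CARD('a) ^ (CARD('n) - vec.dim W) - 1)"
    using card_perp[OF assms] by (simp add: card_Diff_singleton zero_in_perp)
  moreover have "1 \<le> CARD('a)" "1 \<le> CARD('a) ^ (CARD('n) - vec.dim W)"
    using card_field_ge_2[where 'a='a] by auto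
  ultimately show ?thesis by (simp add: of_nat_diff)
qed

lemma PG_point_eq_span_singleton:
  fixes P :: "('a::{field,finite}^'n) set"
  assumes "P \<in> PG_points"
  obtains p where "p \<noteq> 0" "P = vec.span {p}"
proof -
  have P: "vec.subspace P" "vec.dim P = 1" using assms unfolding PG_points_def by auto
  obtain B where B: "B \<subseteq> P" "vec.independent B" "P \<subseteq> vec.span B" "card B = vec.dim P"
    using vec.basis_exists by blast
  have "card B = 1" using B(4) P(2) by simp
  then obtain p where p: "B = {p}" by (rule card_1_singletonE)
  have "p \<noteq> 0" using B(2) p vec.dependent_zero by blast
  moreover have "P = vec.span {p}" using vec.span_subspace[OF B(1,3) P(1)] p by simp
  ultimately show ?thesis by (rule that)
qed

lemma dim_span_Un_PG_points:
  fixes P Q :: "('a::{field,finite}^'n) set"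
  assumes P: "P \<in> PG_points" and Q: "Q \<in> PG_points" and "P \<noteq> Q"
  shows "vec.dim (vec.span (P \<union> Q)) = 2"
proof -
  obtain p where p: "p \<noteq> 0" "P = vec.span {p}" using PG_point_eq_span_singleton[OF P] .
  obtain r where r: "r \<noteq> 0" "Q = vec.span {r}" using PG_point_eq_span_singleton[OF Q] .
  have span_eq: "vec.span (P \<union> Q) = vec.span {p, r}"
    unfolding p(2) r(2) vec.span_eq
    by (auto intro: vec.span_superset[THEN subsetD] vec.span_mono[THEN subsetD])
  have "p \<notin> vec.span {r}"
  proof
    assume "p \<in> vec.span {r}"
    then have "P \<subseteq> Q" using p r vec.span_minimal[of "{p}" "vec.span {r}"] by auto
    then show False
      using assms vec.subspace_dim_equal[of P Q] unfolding PG_points_def by auto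
  qed
  then have "vec.independent {p, r}" "p \<noteq> r"
    using r(1) vec.span_base[of r "{r}"] by (auto simp: vec.independent_insert)
  then show ?thesis
    using span_eq vec.dim_eq_card_independent[of "{p, r}"] by simp
qed

section \<open>The standard equations\<close>

lemma card_off_diagonal:
  assumes "finite A"
  shows "card {(a, b) \<in> A \<times> A. a \<noteq> b} = card A * (card A - 1)"
proof -
  have "{(a, b) \<in> A \<times> A. a \<noteq> b} = A \<times> A - (\<lambda>a. (a, a)) ` A" by auto
  moreover have "card ((\<lambda>a. (a, a)) ` A) = card A" by (rule card_image) (auto intro: inj_onI)
  ultimately show ?thesis
    using assms by (simp add: card_Diff_subset card_cartesian_product diff_mult_distrib2 image_subset_iff)
qed

lemma sum_card_filter_swap:
  assumes "finite A" "finite B"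
  shows "(\<Sum>b\<in>B. card {a \<in> A. R a b}) = (\<Sum>a\<in>A. card {b \<in> B. R a b})"
proof -
  have "(\<Sum>b\<in>B. card {a \<in> A. R a b}) = (\<Sum>b\<in>B. \<Sum>a\<in>A. if R a b then 1 else 0)"
    using assms(1) by (simp add: sum.inter_filter[symmetric])
  also have "\<dots> = (\<Sum>a\<in>A. \<Sum>b\<in>B. if R a b then 1 else 0)"
    by (rule sum.swap)
  also have "\<dots> = (\<Sum>a\<in>A. card {b \<in> B. R a b})"
    using assms(2) by (simp add: sum.inter_filter[symmetric])
  finally show ?thesis .
qed

lemma card_PG_hyperplanes:
  "(real CARD('a) - 1) * card (PG_hyperplanes :: ('a::{field,finite}^'n::finite) set set)
    = real CARD('a) ^ CARD('n) - 1"
proof -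
  have "{H \<in> PG_hyperplanes. {0} \<subseteq> H} = (PG_hyperplanes :: ('a^'n) set set)"
    unfolding PG_hyperplanes_def using vec.subspace_0 by auto
  then show ?thesis
    using card_PG_hyperplanes_containing[OF vec.subspace_single_0, where 'a='a and 'n='n] by simp
qed

lemma sum_pts_in_PG_hyperplanes:
  fixes C :: "('a::{field,finite}^'n::finite) set set"
  assumes "C \<subseteq> PG_points"
  shows "(real CARD('a) - 1) * (\<Sum>H\<in>PG_hyperplanes. real (pts_in C H))
    = card C * (real CARD('a) ^ (CARD('n) - 1) - 1)"
proof -
  have "(\<Sum>H\<in>PG_hyperplanes. pts_in C H) = (\<Sum>P\<in>C. card {H \<in> PG_hyperplanes. P \<subseteq> H})"
    unfolding pts_in_def by (rule sum_card_filter_swap) simp_all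
  then have "(\<Sum>H\<in>PG_hyperplanes. real (pts_in C H))
      = (\<Sum>P\<in>C. real (card {H \<in> PG_hyperplanes. P \<subseteq> H}))"
    by (simp flip: of_nat_sum)
  then have "(real CARD('a) - 1) * (\<Sum>H\<in>PG_hyperplanes. real (pts_in C H))
      = (\<Sum>P\<in>C. (real CARD('a) - 1) * card {H \<in> PG_hyperplanes. P \<subseteq> H})"
    by (simp add: sum_distrib_left)
  also have "\<dots> = (\<Sum>P\<in>C. real CARD('a) ^ (CARD('n) - 1) - 1)"
  proof (rule sum.cong)
    fix P assume "P \<in> C"
    then have "vec.subspace P" "vec.dim P = 1" using assms unfolding PG_points_def by auto
    then show "(real CARD('a) - 1) * card {H \<in> PG_hyperplanes. P \<subseteq> H}
        = real CARD('a) ^ (CARD('n) - 1) - 1"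
      using card_PG_hyperplanes_containing[of P] by simp
  qed simp
  finally show ?thesis by simp
qed

lemma sum_pts_in_pairs_PG_hyperplanes:
  fixes C :: "('a::{field,finite}^'n::finite) set set"
  assumes "C \<subseteq> PG_points"
  shows "(real CARD('a) - 1) * (\<Sum>H\<in>PG_hyperplanes. real (pts_in C H) * (real (pts_in C H) - 1))
    = card C * (real (card C) - 1) * (real CARD('a) ^ (CARD('n) - 2) - 1)"
proof -
  let ?Pairs = "{(P, Q) \<in> C \<times> C. P \<noteq> Q}"
  have real_pairs: "real k * (real k - 1) = real (k * (k - 1))" for k :: nat
    by (cases k) (auto simp: algebra_simps)
  have "pts_in C H * (pts_in C H - 1) = card {PQ \<in> ?Pairs. vec.span (fst PQ \<union> snd PQ) \<subseteq> H}"
    if "H \<in> PG_hyperplanes" for H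
  proof -
    have "vec.span (P \<union> Q) \<subseteq> H \<longleftrightarrow> P \<subseteq> H \<and> Q \<subseteq> H" for P Q
      using that vec.span_minimal[of "P \<union> Q" H] vec.span_superset[of "P \<union> Q"]
      unfolding PG_hyperplanes_def by blast
    then have "{PQ \<in> ?Pairs. vec.span (fst PQ \<union> snd PQ) \<subseteq> H}
        = {(P, Q) \<in> {P \<in> C. P \<subseteq> H} \<times> {P \<in> C. P \<subseteq> H}. P \<noteq> Q}" by auto
    then show ?thesis
      unfolding pts_in_def using card_off_diagonal[of "{P \<in> C. P \<subseteq> H}"] by simp
  qed
  then have "(\<Sum>H\<in>PG_hyperplanes. pts_in C H * (pts_in C H - 1))
      = (\<Sum>PQ\<in>?Pairs. card {H \<in> PG_hyperplanes. vec.span (fst PQ \<union> snd PQ) \<subseteq> H})"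
    by (simp add: sum_card_filter_swap)
  then have "(\<Sum>H\<in>PG_hyperplanes. real (pts_in C H) * (real (pts_in C H) - 1))
      = (\<Sum>PQ\<in>?Pairs. real (card {H \<in> PG_hyperplanes. vec.span (fst PQ \<union> snd PQ) \<subseteq> H}))"
    by (simp only: real_pairs flip: of_nat_sum)
  then have "(real CARD('a) - 1) * (\<Sum>H\<in>PG_hyperplanes. real (pts_in C H) * (real (pts_in C H) - 1))
      = (\<Sum>PQ\<in>?Pairs. (real CARD('a) - 1) * card {H \<in> PG_hyperplanes. vec.span (fst PQ \<union> snd PQ) \<subseteq> H})"
    by (simp add: sum_distrib_left)
  also have "\<dots> = (\<Sum>PQ\<in>?Pairs. real CARD('a) ^ (CARD('n) - 2) - 1)"
  proof (rule sum.cong)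
    fix PQ assume "PQ \<in> ?Pairs"
    then obtain P Q where PQ: "PQ = (P, Q)" "P \<in> C" "Q \<in> C" "P \<noteq> Q" by auto
    then have "P \<in> PG_points" "Q \<in> PG_points" using assms by auto
    then have "vec.dim (vec.span (P \<union> Q)) = 2" by (rule dim_span_Un_PG_points[OF _ _ PQ(4)])
    then show "(real CARD('a) - 1) * card {H \<in> PG_hyperplanes. vec.span (fst PQ \<union> snd PQ) \<subseteq> H}
        = real CARD('a) ^ (CARD('n) - 2) - 1"
      using card_PG_hyperplanes_containing[OF vec.subspace_span[of "P \<union> Q"]] PQ(1) by simp
  qed simp
  also have "\<dots> = card ?Pairs * (real CARD('a) ^ (CARD('n) - 2) - 1)"
    by simp
  also have "card ?Pairs = card C * (card C - 1)"
    by (rule card_off_diagonal) simp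
  finally show ?thesis by (simp add: real_pairs)
qed

section \<open>Moments of the quotients\<close>

lemma sum_mult_card_fibres:
  fixes f :: "'b \<Rightarrow> 'c::comm_semiring_1"
  assumes "finite I" "finite A" "g ` A \<subseteq> I"
  shows "(\<Sum>i\<in>I. f i * of_nat (card {a \<in> A. g a = i})) = (\<Sum>a\<in>A. f (g a))"
proof -
  have "(\<Sum>a\<in>A. f (g a)) = (\<Sum>i\<in>I. \<Sum>a\<in>{a \<in> A. g a = i}. f (g a))"
    by (rule sum.group[OF assms(2,1,3), symmetric])
  also have "\<dots> = (\<Sum>i\<in>I. \<Sum>a\<in>{a \<in> A. g a = i}. f i)"
    by (intro sum.cong) auto
  also have "\<dots> = (\<Sum>i\<in>I. f i * of_nat (card {a \<in> A. g a = i}))"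
    by (simp add: mult.commute)
  finally show ?thesis by simp
qed

lemma sum_falling_quotients_eq:
  fixes x k :: "'b \<Rightarrow> real" and q n u D m :: real and v :: nat
  assumes "2 \<le> v" "D \<noteq> 0"
    and quotient: "\<And>a. a \<in> A \<Longrightarrow> x a = u + k a * D"
    and n: "n = u + m * D"
    and S0: "(q - 1) * card A = q ^ v - 1"
    and S1: "(q - 1) * (\<Sum>a\<in>A. x a) = n * (q ^ (v - 1) - 1)"
    and S2: "(q - 1) * (\<Sum>a\<in>A. x a * (x a - 1)) = n * (n - 1) * (q ^ (v - 2) - 1)"
  shows "(q - 1) * (\<Sum>a\<in>A. k a * (k a - 1))
    = (m*(m-q)*D^2 + (q^2*u - 2*m*q*u + m*q + 2*m*u - q*u - m)*D + (q-1)^2*u^2 + (q-1)*u)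
        * q ^ (v - 2) / D^2 - m * (m - 1)"
proof -
  define K where "K = (\<Sum>a\<in>A. k a * (k a - 1))"
  define X1 where "X1 = (\<Sum>a\<in>A. x a)"
  define X2 where "X2 = (\<Sum>a\<in>A. x a * (x a - 1))"
  have "v = (v - 2) + 2" "v - 1 = (v - 2) + 1" using assms(1) by simp_all
  then have pow: "q ^ v = q^2 * q ^ (v - 2)" "q ^ (v - 1) = q * q ^ (v - 2)"
    by (metis mult.commute power_add, metis mult.commute power_add power_one_right)
  have "D^2 * K = (\<Sum>a\<in>A. x a * (x a - 1) + (1 - 2*u - D) * x a + u * (u + D))"
    unfolding K_def sum_distrib_left
    by (intro sum.cong) (simp_all add: quotient algebra_simps power2_eq_square)
  also have "\<dots> = X2 + (1 - 2*u - D) * X1 + u * (u + D) * card A"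
    unfolding X1_def X2_def by (simp add: sum.distrib sum_distrib_left)
  finally have "D^2 * ((q - 1) * K)
      = (q - 1) * X2 + (1 - 2*u - D) * ((q - 1) * X1) + u * (u + D) * ((q - 1) * card A)"
    by (metis (no_types, opaque_lifting) distrib_left mult.left_commute)
  also have "\<dots> = (m*(m-q)*D^2 + (q^2*u - 2*m*q*u + m*q + 2*m*u - q*u - m)*D + (q-1)^2*u^2 + (q-1)*u)
        * q ^ (v - 2) - m * (m - 1) * D^2"
    unfolding S0 S1[folded X1_def] S2[folded X2_def] pow n
    by (simp add: algebra_simps power2_eq_square)
  finally show ?thesis using assms(2) unfolding K_def by (simp add: field_simps)
qed

lemma eq_add_div_mult_of_mod_eq:
  fixes x u d :: int
  assumes "x mod d = u mod d"
  shows "x = u + (x - u) div d * d"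
  using assms by (simp add: mod_eq_dvd_iff)

lemma finite_quotient_range:
  fixes u m \<Delta> :: int
  assumes "\<Delta> \<ge> 1"
  shows "finite {h. h \<le> m \<and> 0 \<le> u + h*\<Delta>}"
proof (rule finite_subset)
  show "{h. h \<le> m \<and> 0 \<le> u + h*\<Delta>} \<subseteq> {-\<bar>u\<bar>..m}"
  proof
    fix h assume "h \<in> {h. h \<le> m \<and> 0 \<le> u + h*\<Delta>}"
    then have h: "h \<le> m" "0 \<le> u + h*\<Delta>" by auto
    have "-\<bar>u\<bar> \<le> h"
    proof (cases "h < 0")
      case True
      then have "h * \<Delta> \<le> h * 1" using assms by (intro mult_left_mono_neg) auto
      then show ?thesis using h abs_ge_self[of u] by linarith
    qed simp
    then show "h \<in> {-\<bar>u\<bar>..m}" using h by simp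
  qed
qed simp

lemma sum_spec_a_eq_sum_quotients:
  fixes C :: "('a::{field,finite}^'n::finite) set set"
    and u m \<Delta> :: int and f :: "int \<Rightarrow> real"
  assumes "\<Delta> \<ge> 1"
    and mod_eq: "\<forall>H \<in> PG_hyperplanes. int (pts_in C H) mod \<Delta> = u mod \<Delta>"
    and card_C: "int (card C) = u + m*\<Delta>"
  shows "(\<Sum>h \<in> {h. h \<le> m \<and> 0 \<le> u + h*\<Delta>}. f h * real (spec_a C (u + h*\<Delta>)))
    = (\<Sum>H\<in>PG_hyperplanes. f ((int (pts_in C H) - u) div \<Delta>))"
proof -
  let ?Hs = "PG_hyperplanes :: ('a^'n) set set"
  let ?I = "{h. h \<le> m \<and> 0 \<le> u + h*\<Delta>}"
  define k where "k H = (int (pts_in C H) - u) div \<Delta>" for H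
  have pts: "int (pts_in C H) = u + k H * \<Delta>" if "H \<in> ?Hs" for H
    unfolding k_def using mod_eq that by (blast intro: eq_add_div_mult_of_mod_eq)
  have "k ` ?Hs \<subseteq> ?I"
  proof
    fix h assume "h \<in> k ` ?Hs"
    then obtain H where H: "H \<in> ?Hs" "h = k H" by blast
    have "pts_in C H \<le> card C" unfolding pts_in_def by (rule card_mono) auto
    then have "k H * \<Delta> \<le> m * \<Delta>" using pts[OF H(1)] card_C by linarith
    then show "h \<in> ?I" using pts[OF H(1)] H(2) assms(1) by simp
  qed
  moreover have "spec_a C (u + h*\<Delta>) = card {H \<in> ?Hs. k H = h}" for h
    unfolding spec_a_def using pts assms(1) by (intro arg_cong[where f=card]) auto
  ultimately show ?thesis
    using sum_mult_card_fibres[where f = f and g = k and A = ?Hs and I = ?I]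
      finite_quotient_range[OF assms(1)]
    unfolding k_def by simp
qed

theorem lemma5p6:
  fixes C :: "('a::{field,finite}^'n::finite) set set"
    and u m \<Delta> :: int
  assumes "CARD('n) \<ge> 2"
    and "m \<ge> 0" and "\<Delta> \<ge> 1"
    and "C \<subseteq> PG_points"
    and "\<forall>H \<in> PG_hyperplanes. int (pts_in C H) mod \<Delta> = u mod \<Delta>"
    and "int (card C) = u + m*\<Delta>"
  shows "(real CARD('a) - 1) * (\<Sum>h \<in> {h. h \<le> m \<and> 0 \<le> u + h*\<Delta>}. real_of_int (h*(h-1)) * real (spec_a C (u + h*\<Delta>)))
       = real_of_int (tau (int CARD('a)) u \<Delta> m) * real CARD('a) ^ (CARD('n) - 2) / (real_of_int \<Delta>)^2
         - real_of_int (m*(m-1))"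
proof -
  let ?q = "real CARD('a)" and ?u = "real_of_int u" and ?m = "real_of_int m" and ?D = "real_of_int \<Delta>"
  define k where "k H = (int (pts_in C H) - u) div \<Delta>" for H
  have "(?q - 1) * (\<Sum>h \<in> {h. h \<le> m \<and> 0 \<le> u + h*\<Delta>}. real_of_int (h*(h-1)) * real (spec_a C (u + h*\<Delta>)))
      = (?q - 1) * (\<Sum>H\<in>PG_hyperplanes. real_of_int (k H) * (real_of_int (k H) - 1))"
    using sum_spec_a_eq_sum_quotients[OF assms(3,5,6), of "\<lambda>h. real_of_int h * (real_of_int h - 1)"]
    unfolding k_def by simp
  also have "\<dots> = (?m*(?m-?q)*?D^2 + (?q^2*?u - 2*?m*?q*?u + ?m*?q + 2*?m*?u - ?q*?u - ?m)*?D
      + (?q-1)^2*?u^2 + (?q-1)*?u) * ?q ^ (CARD('n) - 2) / ?D^2 - ?m * (?m - 1)"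
  proof (rule sum_falling_quotients_eq[OF assms(1) _ _ _ card_PG_hyperplanes
        sum_pts_in_PG_hyperplanes[OF assms(4)] sum_pts_in_pairs_PG_hyperplanes[OF assms(4)]])
    show "?D \<noteq> 0" using assms(3) by simp
    show "real (card C) = ?u + ?m * ?D" using arg_cong[OF assms(6), of real_of_int] by simp
    show "real (pts_in C H) = ?u + real_of_int (k H) * ?D" if "H \<in> PG_hyperplanes" for H
    proof -
      have "int (pts_in C H) = u + k H * \<Delta>"
        unfolding k_def using assms(5) that by (blast intro: eq_add_div_mult_of_mod_eq)
      then have "real_of_int (int (pts_in C H)) = real_of_int (u + k H * \<Delta>)" by (rule arg_cong)
      then show ?thesis by simp
    qed
  qed
  finally show ?thesis by (simp add: tau_def)
qed

end
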